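(* Let $t\ge2$ and $n\ge1$ be integers and let $\lambda$ be a $t$-core of length at most $tn+1$. Then \[\mathrm{rk}(\lambda)=(n_0(\lambda)-n-1)_++\sum_{i=1}^{t-1}(n_i(\lambda)-n)_+ ,\] where $m_+=\max(m,0)$.
   Context: A $t$-core is a partition with no hook length divisible by $t$. $\mathrm{rk}(\lambda)$ (Frobenius rank) is the largest $j$ with $\lambda_j\ge j$. The beta-set of $\lambda$ is $\beta_i(\lambda)=\lambda_i+tn+1-i$ for $1\le i\le tn+1$, and $n_i(\lambda)$ is the number of $\beta_j(\lambda)$ congruent to $i$ modulo $t$, $0\le i\le t-1$. *)

theory Defs
  imports Main
begin

definition is_partition :: "nat list \<Rightarrow> bool" where
  "is_partition lam \<longleftrightarrow> sorted (rev lam) \<and> (\<forall>x\<in>set lam. 0 < x)"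

definition part :: "nat list \<Rightarrow> nat \<Rightarrow> nat" where
  "part lam i = (if 1 \<le> i \<and> i \<le> length lam then lam ! (i - 1) else 0)"

definition conj_part :: "nat list \<Rightarrow> nat \<Rightarrow> nat" where
  "conj_part lam j = card {k. 1 \<le> k \<and> k \<le> length lam \<and> j \<le> part lam k}"

definition cells :: "nat list \<Rightarrow> (nat \<times> nat) set" where
  "cells lam = {(i, j). 1 \<le> i \<and> i \<le> length lam \<and> 1 \<le> j \<and> j \<le> part lam i}"

definition hook :: "nat list \<Rightarrow> nat \<Rightarrow> nat \<Rightarrow> nat" where
  "hook lam i j = (part lam i - j) + (conj_part lam j - i) + 1"

definition is_core :: "nat \<Rightarrow> nat list \<Rightarrow> bool" where
  "is_core t lam \<longleftrightarrow> is_partition lam \<and> (\<forall>(i, j)\<in>cells lam. \<not> t dvd hook lam i j)"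

definition frob_rank :: "nat list \<Rightarrow> nat" where
  "frob_rank lam = Max ({0} \<union> {j. 1 \<le> j \<and> j \<le> length lam \<and> j \<le> part lam j})"

(* beta_i = lambda_i + t n + 1 - i, for 1 <= i <= t n + 1 (nonnegative since i <= t n + 1) *)
definition beta :: "nat \<Rightarrow> nat \<Rightarrow> nat list \<Rightarrow> nat \<Rightarrow> nat" where
  "beta t n lam i = part lam i + t * n + 1 - i"

definition ncount :: "nat \<Rightarrow> nat \<Rightarrow> nat list \<Rightarrow> nat \<Rightarrow> nat" where
  "ncount t n lam r = card {j. 1 \<le> j \<and> j \<le> t * n + 1 \<and> beta t n lam j mod t = r}"

end

theory Submission
  imports Defs
begin

(* A bead x >= t of the beta-set whose position x - t is empty yields a cell of hook length t,
   in the row of x and in the column fixed by the last bead above x - t. So for a t-core the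
   beta-set is closed under x |-> x - t: on each runner {r, r + t, r + 2t, ...} of the abacus the
   beads fill exactly the n_r lowest positions. Since beta_i > tn iff lambda_i >= i, the Frobenius
   rank counts the beads above tn; on runner 0 these are the positions q > n, on a runner r >= 1
   the positions q >= n, which gives (n_0 - n - 1)_+ and (n_r - n)_+. *)

lemma part_antimono:
  assumes "is_partition lam" "1 \<le> i" "i \<le> k"
  shows "part lam k \<le> part lam i"
proof (cases "k \<le> length lam")
  case True
  have "sorted (rev lam)" using assms(1) by (simp add: is_partition_def)
  then have "lam ! (k - 1) \<le> lam ! (i - 1)"
    using sorted_rev_nth_mono[of lam "i - 1" "k - 1"] assms True by auto
  then show ?thesis using assms True by (simp add: part_def)
qed (simp add: part_def)

lemma part_pos_imp_index:
  assumes "0 < part lam i"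
  shows "1 \<le> i" "i \<le> length lam"
  using assms by (auto simp: part_def split: if_splits)

lemma conj_part_eqI:
  assumes part: "is_partition lam" and above: "part lam (Suc m) < j" and below: "j \<le> part lam m"
  shows "conj_part lam j = m"
proof -
  have "{k. 1 \<le> k \<and> k \<le> length lam \<and> j \<le> part lam k} = {1..m}"
  proof (intro set_eqI iffI)
    fix k assume k: "k \<in> {k. 1 \<le> k \<and> k \<le> length lam \<and> j \<le> part lam k}"
    have "k \<le> m"
    proof (rule ccontr)
      assume "\<not> k \<le> m"
      then have "part lam k \<le> part lam (Suc m)" using part_antimono[OF part, of "Suc m" k] by simp
      then show False using k above by simp
    qed
    then show "k \<in> {1..m}" using k by simp
  next
    fix k assume k: "k \<in> {1..m}"
    then have "j \<le> part lam k" using part_antimono[OF part, of k m] below by simp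
    moreover have "0 < j" using above by simp
    ultimately show "k \<in> {k. 1 \<le> k \<and> k \<le> length lam \<and> j \<le> part lam k}"
      using part_pos_imp_index[of lam k] k by simp
  qed
  then show ?thesis by (simp add: conj_part_def)
qed

lemma frob_rank_eq_card:
  assumes part: "is_partition lam"
  shows "frob_rank lam = card {j. 1 \<le> j \<and> j \<le> length lam \<and> j \<le> part lam j}"
    (is "_ = card ?S")
proof (cases "?S = {}")
  case False
  have fin: "finite ?S" by (rule finite_subset[of _ "{..length lam}"]) auto
  define r where "r = Max ?S"
  have r: "r \<in> ?S" unfolding r_def using Max_in[OF fin False] .
  have "?S = {1..r}"
  proof (intro set_eqI iffI)
    fix k assume "k \<in> ?S"
    then show "k \<in> {1..r}" using fin by (auto simp: r_def)
  next
    fix k assume "k \<in> {1..r}"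
    then have "k \<le> part lam k" using r part_antimono[OF part, of k r] by auto
    then show "k \<in> ?S" using part_pos_imp_index[of lam k] \<open>k \<in> {1..r}\<close> by auto
  qed
  moreover have "frob_rank lam = r"
    unfolding frob_rank_def using fin r by (intro Max_eqI) (auto simp: r_def)
  ultimately show ?thesis by simp
next
  case True
  then show ?thesis unfolding frob_rank_def True by simp
qed

definition beta_set :: "nat \<Rightarrow> nat \<Rightarrow> nat list \<Rightarrow> nat set" where
  "beta_set t n lam = beta t n lam ` {1..t * n + 1}"

lemma beta_add_index:
  assumes "k \<le> t * n + 1"
  shows "beta t n lam k + k = part lam k + (t * n + 1)"
  using assms by (simp add: beta_def)

lemma beta_strict_antimono:
  assumes "is_partition lam" "1 \<le> i" "i < k" "k \<le> t * n + 1"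
  shows "beta t n lam k < beta t n lam i"
  using part_antimono[of lam i k] beta_add_index[of k t n lam] beta_add_index[of i t n lam] assms
  by linarith

lemma inj_on_beta:
  assumes "is_partition lam"
  shows "inj_on (beta t n lam) {1..t * n + 1}"
  by (rule inj_onI) (metis assms atLeastAtMost_iff beta_strict_antimono less_irrefl linorder_neqE_nat)

lemma ncount_eq_card_beta_set:
  assumes "is_partition lam"
  shows "ncount t n lam r = card {x \<in> beta_set t n lam. x mod t = r}"
proof -
  have "{x \<in> beta_set t n lam. x mod t = r}
      = beta t n lam ` {j \<in> {1..t * n + 1}. beta t n lam j mod t = r}"
    by (auto simp: beta_set_def)
  moreover have "inj_on (beta t n lam) {j \<in> {1..t * n + 1}. beta t n lam j mod t = r}"
    using inj_on_beta[OF assms] by (rule inj_on_subset) auto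
  ultimately show ?thesis by (simp add: ncount_def card_image)
qed

lemma frob_rank_eq_card_beta_set_gt:
  assumes part: "is_partition lam" and len: "length lam \<le> t * n + 1"
  shows "frob_rank lam = card {x \<in> beta_set t n lam. t * n < x}"
proof -
  let ?D = "{k \<in> {1..t * n + 1}. t * n < beta t n lam k}"
  have "{j. 1 \<le> j \<and> j \<le> length lam \<and> j \<le> part lam j} = ?D"
  proof (intro set_eqI iffI)
    fix k assume "k \<in> {j. 1 \<le> j \<and> j \<le> length lam \<and> j \<le> part lam j}"
    then show "k \<in> ?D" using len beta_add_index[of k t n lam] by auto
  next
    fix k assume "k \<in> ?D"
    then show "k \<in> {j. 1 \<le> j \<and> j \<le> length lam \<and> j \<le> part lam j}"
      using beta_add_index[of k t n lam] part_pos_imp_index[of lam k] by auto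
  qed
  moreover have "{x \<in> beta_set t n lam. t * n < x} = beta t n lam ` ?D"
    by (auto simp: beta_set_def)
  moreover have "inj_on (beta t n lam) ?D"
    using inj_on_beta[OF part] by (rule inj_on_subset) auto
  ultimately show ?thesis by (simp add: frob_rank_eq_card[OF part] card_image)
qed

lemma hook_of_beta_gap:
  assumes part: "is_partition lam" and len: "length lam \<le> t * n + 1"
    and i: "1 \<le> i" "i \<le> t * n + 1"
    and h: "0 < h" "h \<le> beta t n lam i"
    and gap: "beta t n lam i - h \<notin> beta_set t n lam"
  shows "\<exists>j. (i, j) \<in> cells lam \<and> hook lam i j = h"
proof -
  define N where "N = t * n + 1"
  define b where "b = beta t n lam"
  define c where "c = b i - h"
  have b_add: "\<And>k. k \<le> N \<Longrightarrow> b k + k = part lam k + N"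
    unfolding b_def N_def by (rule beta_add_index)
  define M where "M = {k \<in> {1..N}. c < b k}"
  define m where "m = Max M"
  have fin: "finite M" and i_M: "i \<in> M" using i h unfolding M_def c_def b_def N_def by auto
  have m: "m \<in> M" "i \<le> m"
    unfolding m_def using Max_in[OF fin] Max_ge[OF fin i_M] i_M by auto
  have beyond_m: "k \<notin> M" if "m < k" for k
    using Max_ge[OF fin, of k] that unfolding m_def by auto
  \<comment> \<open>for m < N, b (m + 1) is neither above c (maximality of m) nor equal to c (the gap)\<close>
  have next_part: "part lam (Suc m) + N \<le> c + m"
  proof (cases "m < N")
    case True
    then have "b (Suc m) \<in> beta_set t n lam" unfolding b_def beta_set_def N_def by simp
    then have "b (Suc m) \<noteq> c" using gap unfolding b_def c_def by auto
    moreover have "\<not> c < b (Suc m)" using beyond_m[of "Suc m"] True unfolding M_def by auto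
    ultimately show ?thesis using b_add[of "Suc m"] True by linarith
  next
    case False
    then show ?thesis using m len unfolding M_def N_def part_def by auto
  qed
  define j where "j = c + m + 1 - N"
  have j_le: "j \<le> part lam m" using b_add[of m] m unfolding M_def j_def by auto
  have conj: "conj_part lam j = m"
    by (rule conj_part_eqI[OF part _ j_le]) (use next_part j_def in linarith)
  have "part lam m \<le> part lam i" using part_antimono[OF part] i m by simp
  then have cell: "(i, j) \<in> cells lam"
    using i j_le next_part part_pos_imp_index[of lam i] unfolding cells_def j_def by auto
  have "hook lam i j = (part lam i - j) + (m - i) + 1" unfolding hook_def conj ..
  also have "\<dots> = h"
    using b_add[of i] i h m j_le next_part \<open>part lam m \<le> part lam i\<close>
    unfolding j_def c_def b_def N_def by linarith
  finally show ?thesis using cell by blast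
qed

lemma core_beta_set_diff_mem:
  assumes core: "is_core t lam" and t: "0 < t" and len: "length lam \<le> t * n + 1"
    and x: "x \<in> beta_set t n lam" "t \<le> x"
  shows "x - t \<in> beta_set t n lam"
proof (rule ccontr)
  assume "x - t \<notin> beta_set t n lam"
  moreover obtain i where "i \<in> {1..t * n + 1}" "x = beta t n lam i"
    using x by (auto simp: beta_set_def)
  moreover have "is_partition lam" using core by (simp add: is_core_def)
  ultimately obtain j where "(i, j) \<in> cells lam" "hook lam i j = t"
    using hook_of_beta_gap[OF _ len _ _ t] x by auto
  then show False using core by (auto simp: is_core_def)
qed

lemma down_closed_eq_lessThan_card:
  fixes Q :: "nat set"
  assumes fin: "finite Q" and down: "\<And>q. Suc q \<in> Q \<Longrightarrow> q \<in> Q"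
  shows "Q = {..<card Q}"
proof -
  have below: "p \<in> Q" if "q \<in> Q" "p \<le> q" for p q
    using that(2,1) by (induction rule: inc_induct) (auto intro: down)
  show ?thesis
  proof (intro set_eqI iffI)
    fix q assume "q \<in> Q"
    then have "card {..q} \<le> card Q" using below fin by (intro card_mono) auto
    then show "q \<in> {..<card Q}" by simp
  next
    fix q assume q: "q \<in> {..<card Q}"
    show "q \<in> Q"
    proof (rule ccontr)
      assume "q \<notin> Q"
      then have "Q \<subseteq> {..<q}" using below by (meson lessThan_iff not_le subsetI)
      then show False using q card_mono[of "{..<q}" Q] by simp
    qed
  qed
qed

lemma runner_eq_image_lessThan:
  fixes B :: "nat set"
  assumes fin: "finite B" and t: "0 < t" and down: "\<And>x. x \<in> B \<Longrightarrow> t \<le> x \<Longrightarrow> x - t \<in> B"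
    and r: "r < t"
  shows "{x \<in> B. x mod t = r} = (\<lambda>q. r + t * q) ` {..<card {x \<in> B. x mod t = r}}"
proof -
  define Q where "Q = {q. r + t * q \<in> B}"
  have inj: "inj (\<lambda>q. r + t * q)" using t by (auto simp: inj_def)
  have runner: "{x \<in> B. x mod t = r} = (\<lambda>q. r + t * q) ` Q"
  proof (intro set_eqI iffI)
    fix x assume "x \<in> {x \<in> B. x mod t = r}"
    then show "x \<in> (\<lambda>q. r + t * q) ` Q"
      unfolding Q_def by (auto intro!: image_eqI[of _ _ "x div t"] simp: mult_div_mod_eq)
  qed (use r Q_def in auto)
  have "finite Q" unfolding Q_def using finite_vimageI[OF fin inj] by (simp add: vimage_def)
  moreover have "Suc q \<in> Q \<Longrightarrow> q \<in> Q" for q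
    using down[of "r + t * Suc q"] unfolding Q_def by simp
  ultimately have "Q = {..<card Q}" by (rule down_closed_eq_lessThan_card)
  moreover have "card {x \<in> B. x mod t = r} = card Q"
    unfolding runner using inj by (simp add: card_image inj_on_subset)
  ultimately show ?thesis using runner by simp
qed

lemma mult_less_add_mult_iff:
  fixes t n q r :: nat
  assumes "r < t"
  shows "t * n < r + t * q \<longleftrightarrow> (if r = 0 then Suc n else n) \<le> q"
proof (cases "r = 0")
  case False
  have "t * n < r + t * q" if "n \<le> q" using that mult_le_mono2[of n q t] False by linarith
  moreover have "r + t * q \<le> t * n" if "q < n"
    using that mult_le_mono2[of "Suc q" n t] assms by simp
  ultimately have "t * n < r + t * q \<longleftrightarrow> n \<le> q" by (meson not_le)
  with False show ?thesis by simp
qed (use assms in \<open>simp add: Suc_le_eq\<close>)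

lemma card_runner_gt_mult:
  fixes B :: "nat set"
  assumes fin: "finite B" and t: "0 < t" and down: "\<And>x. x \<in> B \<Longrightarrow> t \<le> x \<Longrightarrow> x - t \<in> B"
    and r: "r < t"
  shows "card {x \<in> B. x mod t = r \<and> t * n < x}
       = card {x \<in> B. x mod t = r} - (if r = 0 then Suc n else n)"
proof -
  let ?c = "card {x \<in> B. x mod t = r}" and ?k = "if r = 0 then Suc n else n"
  have "{x \<in> B. x mod t = r \<and> t * n < x} = {x \<in> {x \<in> B. x mod t = r}. t * n < x}" by auto
  also have "\<dots> = (\<lambda>q. r + t * q) ` {?k..<?c}"
    using t by (subst runner_eq_image_lessThan[OF fin t down r])
      (auto simp: mult_less_add_mult_iff[OF r])
  also have "card \<dots> = ?c - ?k"
    using t by (subst card_image) (auto simp: inj_on_def)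
  finally show ?thesis .
qed

lemma card_eq_sum_card_residues:
  fixes B :: "nat set"
  assumes "finite B" "0 < t"
  shows "card {x \<in> B. P x} = (\<Sum>r<t. card {x \<in> B. x mod t = r \<and> P x})"
proof -
  have "(\<lambda>x. x mod t) ` {x \<in> B. P x} \<subseteq> {..<t}" using assms(2) by auto
  from sum.group[OF _ _ this, of "\<lambda>_. 1 :: nat"] show ?thesis
    using assms(1) by (simp add: conj_commute conj_left_commute)
qed

theorem lemma3p2:
  fixes t n :: nat and lam :: "nat list"
  assumes "t \<ge> 2" and "n \<ge> 1"
    and "is_core t lam"
    and "length lam \<le> t * n + 1"
  shows "int (frob_rank lam) =
           max (int (ncount t n lam 0) - int n - 1) 0
           + (\<Sum>i = 1..t - 1. max (int (ncount t n lam i) - int n) 0)"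
proof -
  let ?B = "beta_set t n lam"
  have part: "is_partition lam" using assms(3) by (simp add: is_core_def)
  have t: "0 < t" using assms(1) by simp
  have fin: "finite ?B" by (simp add: beta_set_def)
  note down = core_beta_set_diff_mem[OF assms(3) t assms(4)]
  have "frob_rank lam = card {x \<in> ?B. t * n < x}"
    by (rule frob_rank_eq_card_beta_set_gt[OF part assms(4)])
  also have "\<dots> = (\<Sum>r<t. card {x \<in> ?B. x mod t = r \<and> t * n < x})"
    by (rule card_eq_sum_card_residues[OF fin t])
  also have "\<dots> = (\<Sum>r<t. ncount t n lam r - (if r = 0 then Suc n else n))"
    by (rule sum.cong)
      (simp_all add: card_runner_gt_mult[OF fin t down] ncount_eq_card_beta_set[OF part])
  also have "{..<t} = insert 0 {1..t - 1}" using t by auto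
  finally have rank: "frob_rank lam
      = (\<Sum>r \<in> insert 0 {1..t - 1}. ncount t n lam r - (if r = 0 then Suc n else n))" .
  have int_diff: "int (a - b) = max (int a - int b) 0" for a b :: nat by simp
  show ?thesis using rank by (simp add: int_diff)
qed

end
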